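(* Let $(m_j)_{j=1}^{\infty}$ be a strictly increasing sequence of positive integers with $m_{j+1}\ge q\,m_j$ for all $j$, where $q\ge 2$. Let $A_j>0$, $B_j\in\mathbb{C}$ satisfy $A_j^2-|B_j|^2=1$ for all $j$, and assume $\sum_{j=1}^{\infty}\log(A_j^2+|B_j|^2)<\infty$. Then for almost every $t\in\mathbb{T}$ the limit $$\lim_{N\to\infty}\prod_{j=1}^{N}\begin{bmatrix} A_j & B_j e^{2\pi i m_j t}\\ \overline{B_j}e^{-2\pi i m_j t} & A_j\end{bmatrix}$$ (factors multiplied in increasing order of $j$ from left to right) exists in $\mathrm{SU}(1,1)$.
   Context: $\mathbb{T}=\mathbb{R}/\mathbb{Z}$ with Lebesgue measure. $\mathrm{SU}(1,1)=\{\begin{bmatrix} A & B\\ \overline{B} & \overline{A}\end{bmatrix}: A,B\in\mathbb{C},\ |A|^2-|B|^2=1\}$, with convergence understood with respect to the complete metric $\rho(G_1,G_2)=\log(1+\|G_1^{-1}G_2-I_2\|_{op})$ (equivalently, entrywise convergence within $\mathrm{SU}(1,1)$). *)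

theory Defs
  imports "HOL-Analysis.Analysis"
begin

definition mat2 :: "complex \<Rightarrow> complex \<Rightarrow> complex \<Rightarrow> complex \<Rightarrow> complex^2^2" where
  "mat2 a b c d = vector [vector [a, b], vector [c, d]]"

definition SU11 :: "(complex^2^2) set" where
  "SU11 = {G. \<exists>A B. G = mat2 A B (cnj B) (cnj A) \<and> (cmod A)\<^sup>2 - (cmod B)\<^sup>2 = 1}"

definition factor :: "(nat \<Rightarrow> real) \<Rightarrow> (nat \<Rightarrow> complex) \<Rightarrow> (nat \<Rightarrow> nat) \<Rightarrow> nat \<Rightarrow> real \<Rightarrow> complex^2^2" where
  "factor A B m j t = mat2 (complex_of_real (A j)) (B j * exp (2 * pi * \<i> * of_nat (m j) * of_real t))
                           (cnj (B j) * exp (- (2 * pi * \<i> * of_nat (m j) * of_real t))) (complex_of_real (A j))"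

fun partial_prod :: "(nat \<Rightarrow> real) \<Rightarrow> (nat \<Rightarrow> complex) \<Rightarrow> (nat \<Rightarrow> nat) \<Rightarrow> nat \<Rightarrow> real \<Rightarrow> complex^2^2" where
  "partial_prod A B m 0 t = mat 1"
| "partial_prod A B m (Suc N) t = partial_prod A B m N t ** factor A B m (Suc N) t"

end

theory Submission
  imports Defs
begin

text \<open>
  Write \<open>c\<^sub>j = B\<^sub>j / A\<^sub>j\<close> and \<open>e\<^sub>m(t) = exp (2 \<pi> i m t)\<close>. The \<open>N\<close>-th partial product is
  \<open>(A\<^sub>1 \<cdots> A\<^sub>N) [[a\<^sub>N, b\<^sub>N], [cnj b\<^sub>N, cnj a\<^sub>N]]\<close> for trigonometric polynomials \<open>a\<^sub>N\<close>, \<open>b\<^sub>N\<close>, and the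
  next factor only adds frequencies shifted by \<open>\<plusminus>m\<^sub>N\<^sub>+\<^sub>1\<close>. As \<open>m\<^sub>N\<^sub>+\<^sub>1 \<ge> 2 m\<^sub>N\<close>, these lie outside the
  window \<open>(-m\<^sub>N, m\<^sub>N]\<close>, so \<open>a\<^sub>N\<close> and \<open>b\<^sub>N\<close> are the partial Fourier sums over the lacunary windows
  \<open>(-m\<^sub>N, m\<^sub>N]\<close> of two fixed \<open>L\<^sup>2\<close> functions, whose squared norms add up to \<open>\<Prod>(1 + |c\<^sub>j|\<^sup>2) < \<infinity>\<close>.

  Lacunary partial Fourier sums converge almost everywhere. The partial sum over \<open>(-n, n]\<close> is the
  average over an interval of length \<open>1/n\<close> plus a remainder. The averages are controlled by the
  weak type bound for the maximal function (Vitali covering), the remainders by a square function: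
  their squared multipliers are \<open>O(min (|j|/n) (n/|j|))\<close>, which is summable along a lacunary
  sequence of \<open>n\<close>. Finally \<open>\<Prod>A\<^sub>j\<close> converges since \<open>\<Sum>log A\<^sub>j < \<infinity>\<close>, and the limit lies in \<open>SU(1,1)\<close>
  because \<open>|a|\<^sup>2 - |b|\<^sup>2 = 1\<close> passes to the limit.
\<close>

section \<open>Characters of the circle and trigonometric polynomials\<close>

definition circle_char :: "int \<Rightarrow> real \<Rightarrow> complex" where
  "circle_char j t = exp (2 * pi * \<i> * of_int j * of_real t)"

lemma circle_char_add: "circle_char (j + l) t = circle_char j t * circle_char l t"
  unfolding circle_char_def by (simp add: algebra_simps flip: exp_add)

lemma circle_char_add_time: "circle_char j (s + t) = circle_char j s * circle_char j t"
  unfolding circle_char_def by (simp add: algebra_simps flip: exp_add)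

lemma cnj_circle_char: "cnj (circle_char j t) = circle_char (- j) t"
  unfolding circle_char_def by (simp add: exp_cnj)

lemma norm_circle_char [simp]: "cmod (circle_char j t) = 1"
  unfolding circle_char_def by simp

lemma continuous_on_circle_char [continuous_intros]: "continuous_on S (circle_char j)"
  unfolding circle_char_def by (intro continuous_intros)

lemma circle_char_int_period: "circle_char j (t + of_int n) = circle_char j t"
proof -
  have "circle_char j (of_int n) = exp (2 * of_int (j * n) * pi * \<i>)"
    unfolding circle_char_def by (simp add: algebra_simps)
  also have "\<dots> = 1" by (rule exp_integer_2pi) simp
  finally show ?thesis by (simp add: circle_char_add_time)
qed

lemma circle_char_has_integral:
  assumes "a \<le> b" "j \<noteq> 0"
  shows "(circle_char j has_integral (circle_char j b - circle_char j a) / (2 * pi * \<i> * of_int j)) {a..b}"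
proof -
  define w where "w = 2 * pi * \<i> * of_int j"
  have "((\<lambda>s. circle_char j s / w) has_vector_derivative circle_char j s) (at s within {a..b})" for s
  proof -
    have "((\<lambda>z. exp (w * z) / w) has_field_derivative exp (w * of_real s)) (at (of_real s))"
      using assms(2) by (auto intro!: derivative_eq_intros simp: w_def)
    from has_vector_derivative_real_field[OF this] show ?thesis
      unfolding circle_char_def w_def by (simp add: mult.assoc has_vector_derivative_at_within)
  qed
  from fundamental_theorem_of_calculus[OF assms(1) this]
  show ?thesis by (simp add: w_def diff_divide_distrib)
qed

lemma circle_char_has_integral_period:
  assumes "n \<ge> 0"
  shows "(circle_char j has_integral (if j = 0 then of_int n else 0)) {a..a + of_int n}"
proof (cases "j = 0")
  case True
  then have "circle_char j = (\<lambda>_. 1)" by (auto simp: circle_char_def)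
  then show ?thesis
    using True assms has_integral_const_real[of "1::complex" a "a + of_int n"]
    by (simp add: scaleR_conv_of_real)
next
  case False
  then show ?thesis
    using circle_char_has_integral[OF _ False, of a "a + of_int n"] assms
    by (simp add: circle_char_int_period)
qed

definition avg_multiplier :: "real \<Rightarrow> int \<Rightarrow> real" where
  "avg_multiplier r j = (if j = 0 then 1 else sin (2 * pi * j * r) / (2 * pi * j * r))"

lemma circle_char_has_integral_centered:
  assumes "r > 0"
  shows "(circle_char j has_integral of_real (2 * r * avg_multiplier r j) * circle_char j t) {t - r..t + r}"
proof (cases "j = 0")
  case True
  then have "circle_char j = (\<lambda>_. 1)" by (auto simp: circle_char_def)
  then show ?thesis
    using True assms has_integral_const_real[of "1::complex" "t - r" "t + r"]
    by (simp add: scaleR_conv_of_real avg_multiplier_def)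
next
  case False
  have "circle_char j s = cis (2 * pi * j * s)" for s
    unfolding circle_char_def cis_conv_exp by (simp add: algebra_simps)
  then have "circle_char j r - circle_char j (- r) = 2 * \<i> * of_real (sin (2 * pi * j * r))"
    by (simp add: complex_eq_iff)
  then have "circle_char j (t + r) - circle_char j (t - r) = circle_char j t * (2 * \<i> * sin (2 * pi * j * r))"
    using circle_char_add_time[of j t r] circle_char_add_time[of j t "- r"]
    by (simp flip: right_diff_distrib)
  then show ?thesis
    using circle_char_has_integral[OF _ False, of "t - r" "t + r"] assms False
    by (simp add: avg_multiplier_def field_simps)
qed

definition coeff_supp :: "(int \<Rightarrow> complex) \<Rightarrow> int set" where
  "coeff_supp c = {j. c j \<noteq> 0}"

definition trig_poly :: "(int \<Rightarrow> complex) \<Rightarrow> real \<Rightarrow> complex" where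
  "trig_poly c t = (\<Sum>j\<in>coeff_supp c. c j * circle_char j t)"

definition l2_sq :: "(int \<Rightarrow> complex) \<Rightarrow> real" where
  "l2_sq c = (\<Sum>j\<in>coeff_supp c. (cmod (c j))\<^sup>2)"

lemma trig_poly_eq_sum:
  assumes "finite S" "coeff_supp c \<subseteq> S"
  shows "trig_poly c t = (\<Sum>j\<in>S. c j * circle_char j t)"
  unfolding trig_poly_def by (rule sum.mono_neutral_left[OF assms]) (auto simp: coeff_supp_def)

lemma l2_sq_eq_sum:
  assumes "finite S" "coeff_supp c \<subseteq> S"
  shows "l2_sq c = (\<Sum>j\<in>S. (cmod (c j))\<^sup>2)"
  unfolding l2_sq_def by (rule sum.mono_neutral_left[OF assms]) (auto simp: coeff_supp_def)

lemma l2_sq_nonneg: "0 \<le> l2_sq c"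
  unfolding l2_sq_def by (simp add: sum_nonneg)

lemma finite_coeff_supp_add:
  "finite (coeff_supp c) \<Longrightarrow> finite (coeff_supp d) \<Longrightarrow> finite (coeff_supp (\<lambda>j. c j + d j))"
  by (rule finite_subset[of _ "coeff_supp c \<union> coeff_supp d"]) (auto simp: coeff_supp_def)

lemma finite_coeff_supp_diff:
  "finite (coeff_supp c) \<Longrightarrow> finite (coeff_supp d) \<Longrightarrow> finite (coeff_supp (\<lambda>j. c j - d j))"
  by (rule finite_subset[of _ "coeff_supp c \<union> coeff_supp d"]) (auto simp: coeff_supp_def)

lemma finite_coeff_supp_mult: "finite (coeff_supp c) \<Longrightarrow> finite (coeff_supp (\<lambda>j. w j * c j))"
  by (rule finite_subset[of _ "coeff_supp c"]) (auto simp: coeff_supp_def)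

lemma coeff_supp_shift: "coeff_supp (\<lambda>j. x * c (j + s)) \<subseteq> (\<lambda>j. j - s) ` coeff_supp c"
  by (auto simp: coeff_supp_def image_iff intro!: exI[of _ "j + s" for j])

lemma finite_coeff_supp_shift: "finite (coeff_supp c) \<Longrightarrow> finite (coeff_supp (\<lambda>j. x * c (j + s)))"
  using coeff_supp_shift by (rule finite_subset) simp

lemma trig_poly_add:
  assumes "finite (coeff_supp c)" "finite (coeff_supp d)"
  shows "trig_poly (\<lambda>j. c j + d j) t = trig_poly c t + trig_poly d t"
proof -
  let ?S = "coeff_supp c \<union> coeff_supp d"
  have "trig_poly (\<lambda>j. c j + d j) t = (\<Sum>j\<in>?S. (c j + d j) * circle_char j t)"
    "trig_poly c t = (\<Sum>j\<in>?S. c j * circle_char j t)" "trig_poly d t = (\<Sum>j\<in>?S. d j * circle_char j t)"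
    using assms by (auto intro!: trig_poly_eq_sum simp: coeff_supp_def)
  then show ?thesis by (simp add: distrib_right sum.distrib)
qed

lemma trig_poly_diff:
  assumes "finite (coeff_supp c)" "finite (coeff_supp d)"
  shows "trig_poly (\<lambda>j. c j - d j) t = trig_poly c t - trig_poly d t"
proof -
  let ?S = "coeff_supp c \<union> coeff_supp d"
  have "trig_poly (\<lambda>j. c j - d j) t = (\<Sum>j\<in>?S. (c j - d j) * circle_char j t)"
    "trig_poly c t = (\<Sum>j\<in>?S. c j * circle_char j t)" "trig_poly d t = (\<Sum>j\<in>?S. d j * circle_char j t)"
    using assms by (auto intro!: trig_poly_eq_sum simp: coeff_supp_def)
  then show ?thesis by (simp add: left_diff_distrib sum_subtractf)
qed

lemma trig_poly_shift:
  assumes "finite (coeff_supp c)"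
  shows "trig_poly (\<lambda>j. x * c (j + s)) t = x * circle_char (- s) t * trig_poly c t"
proof -
  have "trig_poly (\<lambda>j. x * c (j + s)) t = (\<Sum>j\<in>(\<lambda>j. j - s) ` coeff_supp c. x * c (j + s) * circle_char j t)"
    using assms coeff_supp_shift by (intro trig_poly_eq_sum) auto
  also have "\<dots> = (\<Sum>j\<in>coeff_supp c. x * c j * circle_char (j - s) t)"
    by (subst sum.reindex) (auto simp: inj_on_def)
  also have "\<dots> = x * circle_char (- s) t * trig_poly c t"
    by (simp add: trig_poly_def sum_distrib_left circle_char_add[of _ "- s", simplified] algebra_simps)
  finally show ?thesis .
qed

lemma l2_sq_shift:
  assumes "finite (coeff_supp c)"
  shows "l2_sq (\<lambda>j. x * c (j + s)) = (cmod x)\<^sup>2 * l2_sq c"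
proof -
  have "l2_sq (\<lambda>j. x * c (j + s)) = (\<Sum>j\<in>(\<lambda>j. j - s) ` coeff_supp c. (cmod (x * c (j + s)))\<^sup>2)"
    using assms coeff_supp_shift by (intro l2_sq_eq_sum) auto
  also have "\<dots> = (\<Sum>j\<in>coeff_supp c. (cmod (x * c j))\<^sup>2)"
    by (subst sum.reindex) (auto simp: inj_on_def)
  finally show ?thesis
    by (simp add: l2_sq_def sum_distrib_left norm_mult power_mult_distrib)
qed

lemma l2_sq_mult:
  assumes "finite (coeff_supp c)"
  shows "l2_sq (\<lambda>j. a j * c j) = (\<Sum>j\<in>coeff_supp c. (cmod (a j))\<^sup>2 * (cmod (c j))\<^sup>2)"
  using assms by (subst l2_sq_eq_sum[of "coeff_supp c"]) (auto simp: coeff_supp_def norm_mult power_mult_distrib)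

lemma l2_sq_add_disjoint:
  assumes "finite (coeff_supp c)" "finite (coeff_supp d)" "\<And>j. c j = 0 \<or> d j = 0"
  shows "l2_sq (\<lambda>j. c j + d j) = l2_sq c + l2_sq d"
proof -
  let ?S = "coeff_supp c \<union> coeff_supp d"
  have "l2_sq (\<lambda>j. c j + d j) = (\<Sum>j\<in>?S. (cmod (c j + d j))\<^sup>2)"
    "l2_sq c = (\<Sum>j\<in>?S. (cmod (c j))\<^sup>2)" "l2_sq d = (\<Sum>j\<in>?S. (cmod (d j))\<^sup>2)"
    using assms(1,2) by (auto intro!: l2_sq_eq_sum simp: coeff_supp_def)
  moreover have "(cmod (c j + d j))\<^sup>2 = (cmod (c j))\<^sup>2 + (cmod (d j))\<^sup>2" for j
    using assms(3)[of j] by auto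
  ultimately show ?thesis by (simp add: sum.distrib)
qed

lemma l2_sq_eq_0_iff:
  assumes "finite (coeff_supp c)"
  shows "l2_sq c = 0 \<longleftrightarrow> coeff_supp c = {}"
  using assms by (simp add: l2_sq_def sum_nonneg_eq_0_iff coeff_supp_def)

lemma continuous_on_trig_poly [continuous_intros]: "continuous_on S (trig_poly c)"
  unfolding trig_poly_def[abs_def] by (intro continuous_intros)

lemma borel_measurable_trig_poly [measurable]: "trig_poly c \<in> borel_measurable borel"
  by (intro borel_measurable_continuous_onI continuous_on_trig_poly)

lemma Parseval_trig_poly:
  assumes "finite (coeff_supp c)" "n \<ge> 0"
  shows "((\<lambda>t. (cmod (trig_poly c t))\<^sup>2) has_integral (of_int n * l2_sq c)) {a..a + of_int n}"
proof -
  let ?S = "coeff_supp c"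
  have prod: "trig_poly c t * cnj (trig_poly c t) = (\<Sum>j\<in>?S. \<Sum>l\<in>?S. c j * cnj (c l) * circle_char (j - l) t)" for t
    by (simp add: trig_poly_def sum_product cnj_circle_char circle_char_add[of _ "- l" for l, simplified]
        algebra_simps)
  have "((\<lambda>t. \<Sum>j\<in>?S. \<Sum>l\<in>?S. c j * cnj (c l) * circle_char (j - l) t) has_integral
        (\<Sum>j\<in>?S. \<Sum>l\<in>?S. c j * cnj (c l) * (if j - l = 0 then of_int n else 0))) {a..a + of_int n}"
    using assms by (intro has_integral_sum has_integral_mult_right circle_char_has_integral_period) auto
  also have "(\<Sum>j\<in>?S. \<Sum>l\<in>?S. c j * cnj (c l) * (if j - l = 0 then of_int n else 0))
      = of_real (of_int n * l2_sq c)"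
    using assms(1) by (simp add: if_distrib l2_sq_def sum_distrib_left mult.commute cong: if_cong
        flip: complex_norm_square)
  finally have "((\<lambda>t. trig_poly c t * cnj (trig_poly c t)) has_integral of_real (of_int n * l2_sq c))
      {a..a + of_int n}"
    by (simp only: prod)
  from has_integral_linear[OF this bounded_linear_Re] show ?thesis
    by (simp add: o_def complex_norm_square[symmetric])
qed

lemma trig_poly_has_integral_centered:
  assumes "finite (coeff_supp c)" "r > 0"
  shows "(trig_poly c has_integral of_real (2 * r) * trig_poly (\<lambda>j. of_real (avg_multiplier r j) * c j) t)
    {t - r..t + r}"
proof -
  have "((\<lambda>s. \<Sum>j\<in>coeff_supp c. c j * circle_char j s) has_integral
         (\<Sum>j\<in>coeff_supp c. c j * (of_real (2 * r * avg_multiplier r j) * circle_char j t))) {t - r..t + r}"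
    by (intro has_integral_sum has_integral_mult_right circle_char_has_integral_centered assms)
  moreover have "trig_poly (\<lambda>j. of_real (avg_multiplier r j) * c j) t
      = (\<Sum>j\<in>coeff_supp c. of_real (avg_multiplier r j) * c j * circle_char j t)"
    using assms by (intro trig_poly_eq_sum) (auto simp: coeff_supp_def)
  ultimately show ?thesis
    unfolding trig_poly_def[abs_def] by (simp add: sum_distrib_left algebra_simps)
qed

lemma integral_norm_trig_poly_le:
  assumes "finite (coeff_supp c)" "n \<ge> 0"
  shows "integral {a..a + of_int n} (\<lambda>t. cmod (trig_poly c t)) \<le> of_int n * sqrt (l2_sq c)"
proof (cases "l2_sq c = 0")
  case True
  then have "trig_poly c = (\<lambda>_. 0)"
    using assms(1) by (auto simp: l2_sq_eq_0_iff trig_poly_def[abs_def])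
  then show ?thesis using True by simp
next
  case False
  define e where "e = sqrt (l2_sq c)"
  have e: "0 < e" using False l2_sq_nonneg[of c] by (simp add: e_def)
  \<comment> \<open>AM-GM with the optimal weight, \<open>|z| \<le> e/2 + |z|\<^sup>2/(2e)\<close>, then Parseval.\<close>
  have am_gm: "cmod z \<le> e / 2 + (cmod z)\<^sup>2 / (2 * e)" for z
  proof -
    have "0 \<le> (cmod z - e)\<^sup>2" by simp
    then show ?thesis using e by (simp add: field_simps power2_eq_square)
  qed
  have "((\<lambda>t. e / 2 + (cmod (trig_poly c t))\<^sup>2 / (2 * e)) has_integral
      (of_int n * (e / 2) + of_int n * l2_sq c / (2 * e))) {a..a + of_int n}"
    using has_integral_const_real[of "e / 2" a "a + of_int n"] assms
      has_integral_divide[OF Parseval_trig_poly[OF assms], of "2 * e"]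
    by (intro has_integral_add) auto
  moreover have "of_int n * (e / 2) + of_int n * l2_sq c / (2 * e) = of_int n * e"
    using e l2_sq_nonneg[of c] by (simp add: e_def field_simps)
  ultimately have "((\<lambda>t. e / 2 + (cmod (trig_poly c t))\<^sup>2 / (2 * e)) has_integral of_int n * e)
      {a..a + of_int n}"
    by simp
  moreover have "(\<lambda>t. cmod (trig_poly c t)) integrable_on {a..a + of_int n}"
    by (intro integrable_continuous_interval continuous_intros)
  ultimately show ?thesis
    using am_gm by (intro has_integral_le[OF integrable_integral]) (auto simp: e_def)
qed

section \<open>Partial sums over lacunary windows\<close>

definition trunc_coeffs :: "nat \<Rightarrow> (int \<Rightarrow> complex) \<Rightarrow> int \<Rightarrow> complex" where
  "trunc_coeffs n c j = (if - int n < j \<and> j \<le> int n then c j else 0)"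

lemma finite_coeff_supp_trunc_coeffs: "finite (coeff_supp (trunc_coeffs n c))"
  by (rule finite_subset[of _ "{- int n..int n}"]) (auto simp: coeff_supp_def trunc_coeffs_def)

lemma trunc_coeffs_trunc_coeffs: "n \<le> n' \<Longrightarrow> trunc_coeffs n' (trunc_coeffs n c) = trunc_coeffs n c"
  by (auto simp: trunc_coeffs_def fun_eq_iff)

lemma trunc_coeffs_diff: "trunc_coeffs n (\<lambda>j. c j - d j) = (\<lambda>j. trunc_coeffs n c j - trunc_coeffs n d j)"
  by (auto simp: trunc_coeffs_def fun_eq_iff)

lemma l2_sq_trunc_coeffs_split:
  assumes "finite (coeff_supp c)"
  shows "l2_sq c = l2_sq (trunc_coeffs n c) + l2_sq (\<lambda>j. c j - trunc_coeffs n c j)"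
proof -
  have "l2_sq (\<lambda>j. trunc_coeffs n c j + (c j - trunc_coeffs n c j))
      = l2_sq (trunc_coeffs n c) + l2_sq (\<lambda>j. c j - trunc_coeffs n c j)"
    using assms by (intro l2_sq_add_disjoint finite_coeff_supp_diff finite_coeff_supp_trunc_coeffs)
      (auto simp: trunc_coeffs_def)
  then show ?thesis by simp
qed

text \<open>The partial sum over \<open>(-n, n]\<close> is the average over an interval of length \<open>1/n\<close> plus a
  remainder whose multiplier is small both for \<open>|j|\<close> much smaller and much larger than \<open>n\<close>.\<close>

definition rem_multiplier :: "nat \<Rightarrow> int \<Rightarrow> real" where
  "rem_multiplier n j = (if - int n < j \<and> j \<le> int n then 1 else 0) - avg_multiplier (1 / (2 * real n)) j"

lemma trig_poly_trunc_coeffs_split: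
  assumes "finite (coeff_supp c)"
  shows "trig_poly (trunc_coeffs n c) t = trig_poly (\<lambda>j. of_real (avg_multiplier (1 / (2 * real n)) j) * c j) t
           + trig_poly (\<lambda>j. of_real (rem_multiplier n j) * c j) t"
proof -
  have "trunc_coeffs n c = (\<lambda>j. of_real (avg_multiplier (1 / (2 * real n)) j) * c j + of_real (rem_multiplier n j) * c j)"
    by (auto simp: fun_eq_iff trunc_coeffs_def rem_multiplier_def algebra_simps)
  then show ?thesis
    using assms by (simp add: trig_poly_add finite_coeff_supp_mult)
qed

lemma rem_multiplier_0: "n > 0 \<Longrightarrow> rem_multiplier n 0 = 0"
  by (simp add: rem_multiplier_def avg_multiplier_def)

lemma one_minus_sinc_sq_le:
  fixes y :: real
  assumes "0 < y" "y \<le> pi"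
  shows "(1 - sin y / y)\<^sup>2 \<le> y / 2"
proof -
  have "0 \<le> sin y / y" "sin y / y \<le> 1"
    using sin_ge_zero[of y] sin_x_le_x[of y] assms by auto
  then have "(1 - sin y / y)\<^sup>2 \<le> 1 - sin y / y"
    by (simp add: power2_eq_square mult_left_le)
  also have "\<dots> \<le> y / 2"
  proof -
    have "\<bar>sin y - y\<bar> \<le> y\<^sup>2 / 2"
      using Maclaurin_sin_bound[of y 2] by (simp add: sin_coeff_def numeral_2_eq_2)
    then have "y - sin y \<le> y\<^sup>2 / 2" by arith
    then show ?thesis using assms(1) by (simp add: field_simps power2_eq_square)
  qed
  finally show ?thesis .
qed

lemma sinc_sq_le: "(sin y / y)\<^sup>2 \<le> 1 / (y::real)\<^sup>2"
  using abs_sin_le_one[of y] by (simp add: power_divide abs_square_le_1 divide_right_mono)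

lemma rem_multiplier_sq_le:
  assumes "n > 0" "j \<noteq> 0"
  shows "(rem_multiplier n j)\<^sup>2 \<le> 2 * min (\<bar>j\<bar> / n) (n / \<bar>j\<bar>)"
proof -
  define y where "y = pi * \<bar>j\<bar> / n"
  have y: "y > 0" using assms by (simp add: y_def)
  have avg: "avg_multiplier (1 / (2 * real n)) j = sin y / y"
    using assms by (cases "j \<ge> 0") (auto simp: avg_multiplier_def y_def field_simps)
  show ?thesis
  proof (cases "- int n < j \<and> j \<le> int n")
    case True
    then have jn: "\<bar>j\<bar> \<le> real n" by auto
    then have "(1 - sin y / y)\<^sup>2 \<le> y / 2"
      using assms y by (intro one_minus_sinc_sq_le) (auto simp: y_def field_simps)
    also have "\<dots> \<le> 2 * (\<bar>j\<bar> / n)"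
      using assms pi_less_4 by (simp add: y_def field_simps)
    finally have "(rem_multiplier n j)\<^sup>2 \<le> 2 * (\<bar>j\<bar> / n)"
      using True by (simp add: rem_multiplier_def avg)
    moreover have "\<bar>j\<bar> / n \<le> 1" "1 \<le> n / \<bar>j\<bar>"
      using jn assms by auto
    ultimately show ?thesis by (simp add: min_absorb1)
  next
    case False
    then have jn: "real n \<le> \<bar>j\<bar>" by auto
    have "(sin y / y)\<^sup>2 \<le> (n / \<bar>j\<bar>)\<^sup>2 / pi\<^sup>2"
      using sinc_sq_le[of y] assms by (simp add: y_def field_simps)
    also have "\<dots> \<le> (n / \<bar>j\<bar>)\<^sup>2 / 1"
      using pi_gt3 one_le_power[of pi 2] by (intro divide_left_mono) auto
    also have "\<dots> \<le> n / \<bar>j\<bar>"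
      using jn assms mult_left_mono[of "n / \<bar>j\<bar>" 1 "n / \<bar>j\<bar>"] by (simp add: power2_eq_square)
    finally have "(rem_multiplier n j)\<^sup>2 \<le> n / \<bar>j\<bar>"
      unfolding rem_multiplier_def if_not_P[OF False] avg by simp
    moreover have "n / \<bar>j\<bar> \<le> 1" "1 \<le> \<bar>j\<bar> / n"
      using jn assms by auto
    then have "min (\<bar>j\<bar> / n) (n / \<bar>j\<bar>) = n / \<bar>j\<bar>"
      by (simp add: min_absorb2)
    ultimately show ?thesis
      using divide_nonneg_nonneg[of "real n" "\<bar>j\<bar>"] by linarith
  qed
qed

text \<open>As in the theorem, sequences are indexed from \<open>1\<close>; the value \<open>m 0\<close> is irrelevant.\<close>

definition lacunary :: "(nat \<Rightarrow> nat) \<Rightarrow> bool" where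
  "lacunary m \<longleftrightarrow> (\<forall>k\<ge>1. 0 < m k \<and> 2 * m k \<le> m (Suc k))"

lemma lacunary_pos: "lacunary m \<Longrightarrow> 1 \<le> k \<Longrightarrow> 0 < m k"
  by (simp add: lacunary_def)

lemma lacunary_double: "lacunary m \<Longrightarrow> 1 \<le> k \<Longrightarrow> 2 * m k \<le> m (Suc k)"
  by (simp add: lacunary_def)

lemma lacunary_mono:
  assumes "lacunary m" "1 \<le> k" "k \<le> k'"
  shows "m k \<le> m k'"
  using assms(3)
proof (induction k' rule: dec_induct)
  case (step k')
  then show ?case using assms(1,2) by (auto simp: lacunary_def intro: order_trans[of _ "2 * m k'"])
qed simp

lemma sum_min_inverse_le:
  fixes y :: "nat \<Rightarrow> real"
  assumes pos: "\<And>k. M \<le> k \<Longrightarrow> 0 < y k"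
    and lac: "\<And>k. M \<le> k \<Longrightarrow> 2 * y k \<le> y (Suc k)"
  shows "(\<Sum>k\<in>{M..L}. min (y k) (1 / y k)) \<le> 4"
proof -
  \<comment> \<open>A potential: \<open>\<phi> (y n)\<close> bounds the partial sum up to \<open>n\<close>, since
    \<open>\<phi> (x/2) + min x (1/x) \<le> \<phi> x\<close> and \<open>\<phi>\<close> is monotone.\<close>
  define \<phi> where "\<phi> x = (if x \<le> 1 then 2 * x else 4 - 2 / x)" for x :: real
  have \<phi>_mono: "\<phi> a \<le> \<phi> b" if "0 < a" "a \<le> b" for a b
  proof (cases "a \<le> 1 \<and> 1 < b")
    case True
    then have "2 \<le> 4 - 2 / b" by (simp add: field_simps)
    then show ?thesis using True by (simp add: \<phi>_def)
  qed (use that in \<open>auto simp: \<phi>_def field_simps\<close>)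
  have \<phi>_step: "\<phi> (x / 2) + min x (1 / x) \<le> \<phi> x" if "0 < x" for x
  proof -
    have "x * x + 3 \<le> 4 * x" if "1 < x" "x \<le> 2"
      using mult_nonneg_nonpos[of "x - 1" "x - 3"] that by (simp add: algebra_simps)
    then show ?thesis
      using \<open>0 < x\<close> by (auto simp: \<phi>_def min_def field_simps)
  qed
  have partial: "(\<Sum>k\<in>{M..n}. min (y k) (1 / y k)) \<le> \<phi> (y n)" if "M \<le> n" for n
    using that
  proof (induction n rule: dec_induct)
    case base
    show ?case using pos[of M] by (auto simp: \<phi>_def min_def field_simps)
  next
    case (step n)
    have "(\<Sum>k\<in>{M..Suc n}. min (y k) (1 / y k)) \<le> \<phi> (y n) + min (y (Suc n)) (1 / y (Suc n))"
      using step by simp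
    also have "\<dots> \<le> \<phi> (y (Suc n) / 2) + min (y (Suc n)) (1 / y (Suc n))"
      using \<phi>_mono[of "y n" "y (Suc n) / 2"] pos[of n] lac[of n] step(1) by simp
    also have "\<dots> \<le> \<phi> (y (Suc n))"
      using \<phi>_step pos[of "Suc n"] step(1) by simp
    finally show ?case .
  qed
  show ?thesis
  proof (cases "M \<le> L")
    case True
    moreover have "\<phi> (y L) \<le> 4"
      using pos[OF True] by (auto simp: \<phi>_def field_simps)
    ultimately show ?thesis
      using partial[OF True] by linarith
  qed simp
qed

lemma sum_rem_multiplier_sq_le:
  assumes "lacunary m" "1 \<le> M"
  shows "(\<Sum>k\<in>{M..L}. (rem_multiplier (m k) j)\<^sup>2) \<le> 8"
proof (cases "j = 0")
  case True
  then show ?thesis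
    using assms by (simp add: rem_multiplier_0 lacunary_def)
next
  case False
  define y where "y k = real (m k) / \<bar>j\<bar>" for k
  have m: "0 < m k" "2 * m k \<le> m (Suc k)" if "M \<le> k" for k
    using assms that by (auto simp: lacunary_def)
  have "(\<Sum>k\<in>{M..L}. (rem_multiplier (m k) j)\<^sup>2) \<le> (\<Sum>k\<in>{M..L}. 2 * min (y k) (1 / y k))"
    using rem_multiplier_sq_le[OF m(1) False] by (intro sum_mono) (auto simp: y_def min.commute)
  also have "\<dots> \<le> 2 * 4"
  proof -
    have "2 * y k \<le> y (Suc k)" if "M \<le> k" for k
      using m(2)[OF that] by (simp add: y_def divide_right_mono flip: of_nat_mult)
    then show ?thesis
      using sum_min_inverse_le[of M y L] m False by (simp add: y_def sum_distrib_left[symmetric])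
  qed
  finally show ?thesis by simp
qed

lemma sum_l2_sq_remainders_le:
  assumes "lacunary m" "1 \<le> M" "finite (coeff_supp c)"
  shows "(\<Sum>k\<in>{M..L}. l2_sq (\<lambda>j. of_real (rem_multiplier (m k) j) * c j)) \<le> 8 * l2_sq c"
proof -
  have "(\<Sum>k\<in>{M..L}. l2_sq (\<lambda>j. of_real (rem_multiplier (m k) j) * c j))
      = (\<Sum>j\<in>coeff_supp c. (\<Sum>k\<in>{M..L}. (rem_multiplier (m k) j)\<^sup>2) * (cmod (c j))\<^sup>2)"
    using assms(3) by (simp add: l2_sq_mult sum_distrib_right sum.swap[of _ "{M..L}"])
  also have "\<dots> \<le> (\<Sum>j\<in>coeff_supp c. 8 * (cmod (c j))\<^sup>2)"
    using sum_rem_multiplier_sq_le[OF assms(1,2)] by (intro sum_mono mult_right_mono) auto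
  finally show ?thesis by (simp add: l2_sq_def sum_distrib_left)
qed

section \<open>A maximal inequality for lacunary partial sums\<close>

lemma finite_if_disjoint_cballs:
  fixes C :: "'a::heine_borel set"
  assumes "bounded C" "pairwise (\<lambda>i j. disjnt (cball i (r i)) (cball j (r j))) C"
    and "0 < r0" "\<And>i. i \<in> C \<Longrightarrow> r0 \<le> r i"
  shows "finite C"
proof -
  have "r0 \<le> dist i j" if "i \<in> C" "j \<in> C" "i \<noteq> j" for i j
  proof -
    have "disjnt (cball i (r i)) (cball j (r j))"
      using assms(2) that by (simp add: pairwise_def)
    moreover have "j \<in> cball j (r j)"
      using assms(3) assms(4)[of j] that by auto
    ultimately have "j \<notin> cball i (r i)"
      by (auto simp: disjnt_def)
    then show ?thesis using assms(4)[of i] that by (simp add: not_le)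
  qed
  then have "uniform_discrete C"
    using assms(3) by (intro uniformI2) auto
  then show ?thesis
    using assms(1) uniform_discrete_finite_iff by blast
qed

lemma sum_integral_disjoint_intervals_le:
  fixes g :: "real \<Rightarrow> real"
  assumes "finite C" "continuous_on UNIV g" "\<And>x. 0 \<le> g x"
    and disj: "pairwise (\<lambda>i j. disjnt (cball i (r i)) (cball j (r j))) C"
    and sub: "\<And>i. i \<in> C \<Longrightarrow> {i - r i..i + r i} \<subseteq> {a..b}"
  shows "(\<Sum>i\<in>C. integral {i - r i..i + r i} g) \<le> integral {a..b} g"
proof -
  have union: "(g has_integral (\<Sum>i\<in>C. integral {i - r i..i + r i} g)) (\<Union>i\<in>C. {i - r i..i + r i})"
  proof (rule has_integral_UN[OF \<open>finite C\<close>])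
    show "(g has_integral integral {i - r i..i + r i} g) {i - r i..i + r i}" for i
      by (intro integrable_integral integrable_continuous_interval continuous_on_subset[OF assms(2)]) auto
    show "pairwise (\<lambda>i j. negligible ({i - r i..i + r i} \<inter> {j - r j..j + r j})) C"
      using disj by (auto simp: pairwise_def disjnt_def cball_eq_atLeastAtMost)
  qed
  moreover have "(\<Union>i\<in>C. {i - r i..i + r i}) \<subseteq> {a..b}"
    using sub by blast
  moreover have "g integrable_on {a..b}"
    by (intro integrable_continuous_interval continuous_on_subset[OF assms(2)]) auto
  ultimately show ?thesis
    using integral_subset_le[OF _ has_integral_integrable[OF union]] assms(3) integral_unique[OF union]
    by metis
qed

text \<open>The weak type (1,1) bound for the centred maximal function, via Vitali covering.\<close>

lemma emeasure_large_averages_le: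
  fixes g :: "real \<Rightarrow> real" and R S :: "real set"
  assumes g: "continuous_on UNIV g" "\<And>x. 0 \<le> g x"
    and R: "finite R" "\<And>r. r \<in> R \<Longrightarrow> 0 < r \<and> r \<le> d"
    and "0 < \<alpha>" "S \<subseteq> {a..b}"
    and large: "\<And>t. t \<in> S \<Longrightarrow> \<exists>r\<in>R. 2 * r * \<alpha> < integral {t - r..t + r} g"
  shows "emeasure lborel S \<le> ennreal (5 / \<alpha> * integral {a - d..b + d} g)"
proof (cases "S = {}")
  case False
  have "\<forall>t\<in>S. \<exists>r. r \<in> R \<and> 2 * r * \<alpha> < integral {t - r..t + r} g"
    using large by blast
  then obtain rad where rad: "\<And>t. t \<in> S \<Longrightarrow> rad t \<in> R \<and> 2 * rad t * \<alpha> < integral {t - rad t..t + rad t} g"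
    by metis
  have rad_pos: "0 < rad t \<and> rad t \<le> d" if "t \<in> S" for t
    using rad[OF that] R(2) by auto
  have "S \<subseteq> (\<Union>t\<in>S. cball (id t) (rad t))"
  proof
    fix t assume "t \<in> S"
    then show "t \<in> (\<Union>t\<in>S. cball (id t) (rad t))"
      using rad_pos[of t] by (intro UN_I[of t]) auto
  qed
  then obtain C where "countable C" and C: "C \<subseteq> S"
    and disj: "pairwise (\<lambda>i j. disjnt (cball (id i) (rad i)) (cball (id j) (rad j))) C"
    and cover: "S \<subseteq> (\<Union>i\<in>C. cball (id i) (5 * rad i))"
    using rad_pos by (rule Vitali_covering_lemma_cballs)
  have "bounded C"
    using C assms(6) bounded_subset[OF bounded_closed_interval] by blast
  moreover have "R \<noteq> {}"
    using False rad by blast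
  then have "0 < Min R" "\<And>i. i \<in> C \<Longrightarrow> Min R \<le> rad i"
    using C R rad by auto
  ultimately have "finite C"
    by (rule finite_if_disjoint_cballs[OF _ disj[unfolded id_apply]])
  have "emeasure lborel S \<le> emeasure lborel (\<Union>i\<in>C. cball i (5 * rad i))"
    using cover \<open>finite C\<close> by (intro emeasure_mono) auto
  also have "\<dots> \<le> (\<Sum>i\<in>C. emeasure lborel (cball i (5 * rad i)))"
    using \<open>finite C\<close> by (intro emeasure_subadditive_finite) auto
  also have "\<dots> = (\<Sum>i\<in>C. ennreal (10 * rad i))"
  proof (intro sum.cong refl)
    fix i assume "i \<in> C"
    then have "0 < rad i" using C rad_pos by blast
    then show "emeasure lborel (cball i (5 * rad i)) = ennreal (10 * rad i)"
      by (simp add: cball_eq_atLeastAtMost)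
  qed
  also have "\<dots> = ennreal (\<Sum>i\<in>C. 10 * rad i)"
    using C rad_pos by (intro sum_ennreal) (force simp: less_imp_le)
  also have "\<dots> \<le> ennreal (5 / \<alpha> * (\<Sum>i\<in>C. integral {i - rad i..i + rad i} g))"
  proof (intro ennreal_leI)
    have "10 * rad i \<le> 5 / \<alpha> * integral {i - rad i..i + rad i} g" if "i \<in> C" for i
      using rad[of i] that C \<open>0 < \<alpha>\<close> by (auto simp: field_simps)
    then show "(\<Sum>i\<in>C. 10 * rad i) \<le> 5 / \<alpha> * (\<Sum>i\<in>C. integral {i - rad i..i + rad i} g)"
      by (simp add: sum_distrib_left sum_mono)
  qed
  also have "\<dots> \<le> ennreal (5 / \<alpha> * integral {a - d..b + d} g)"
    using \<open>finite C\<close> g disj C assms(5,6) rad_pos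
    by (intro ennreal_leI mult_left_mono sum_integral_disjoint_intervals_le) (force simp: subset_iff)+
  finally show ?thesis .
qed simp

lemma emeasure_Markov_continuous:
  fixes G :: "real \<Rightarrow> real"
  assumes "continuous_on {a..b} G" "\<And>t. t \<in> {a..b} \<Longrightarrow> 0 \<le> G t" "0 < c"
  shows "emeasure lborel {t\<in>{a..b}. c \<le> G t} \<le> ennreal (integral {a..b} G / c)"
proof -
  have G: "set_integrable lborel {a..b} G"
    by (rule borel_integrable_atLeastAtMost'[OF assms(1)])
  have "emeasure lborel {t\<in>{a..b}. c \<le> G t} \<le> (1 / c) * (LINT x:{a..b}|lborel. G x)"
    using assms by (intro integral_Markov_inequality'[OF G]) auto
  also have "(LINT x:{a..b}|lborel. G x) = integral {a..b} G"
    using set_borel_integral_eq_integral(2)[OF G] .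
  finally show ?thesis by simp
qed

lemma emeasure_large_smoothed_sums_le:
  assumes "lacunary m" "1 \<le> M" "finite (coeff_supp c)" "0 < \<alpha>"
  shows "emeasure lborel {t\<in>{0..1}. \<exists>k\<in>{M..L}.
      \<alpha> < cmod (trig_poly (\<lambda>j. of_real (avg_multiplier (1 / (2 * real (m k))) j) * c j) t)}
    \<le> ennreal (10 * sqrt (l2_sq c) / \<alpha>)"
proof -
  define r where "r k = 1 / (2 * real (m k))" for k
  have r: "0 < r k" "r k \<le> 1 / 2" if "M \<le> k" for k
    using lacunary_pos[OF assms(1), of k] assms(2) that by (auto simp: r_def field_simps)
  have "emeasure lborel {t\<in>{0..1}. \<exists>k\<in>{M..L}.
      \<alpha> < cmod (trig_poly (\<lambda>j. of_real (avg_multiplier (r k) j) * c j) t)}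
    \<le> ennreal (5 / \<alpha> * integral {0 - 1/2..1 + 1/2} (\<lambda>s. cmod (trig_poly c s)))"
  proof (rule emeasure_large_averages_le[where R = "r ` {M..L}"])
    fix t assume "t \<in> {t\<in>{0..1}. \<exists>k\<in>{M..L}. \<alpha> < cmod (trig_poly (\<lambda>j. of_real (avg_multiplier (r k) j) * c j) t)}"
    then obtain k where k: "k \<in> {M..L}" "\<alpha> < cmod (trig_poly (\<lambda>j. of_real (avg_multiplier (r k) j) * c j) t)"
      by blast
    have "(trig_poly c has_integral of_real (2 * r k) * trig_poly (\<lambda>j. of_real (avg_multiplier (r k) j) * c j) t)
        {t - r k..t + r k}"
      using r[of k] k(1) by (intro trig_poly_has_integral_centered assms(3)) auto
    then have "2 * r k * \<alpha> < cmod (integral {t - r k..t + r k} (trig_poly c))"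
      using r[of k] k by (simp add: integral_unique norm_mult)
    also have "\<dots> \<le> integral {t - r k..t + r k} (\<lambda>s. cmod (trig_poly c s))"
      by (intro integral_norm_bound_integral integrable_continuous_interval continuous_intros) auto
    finally show "\<exists>r\<in>r ` {M..L}. 2 * r * \<alpha> < integral {t - r..t + r} (\<lambda>s. cmod (trig_poly c s))"
      using k(1) by blast
  next
    show "continuous_on UNIV (\<lambda>s. cmod (trig_poly c s))"
      by (intro continuous_intros)
  qed (use r assms(4) in auto)
  also have "\<dots> \<le> ennreal (10 * sqrt (l2_sq c) / \<alpha>)"
    using integral_norm_trig_poly_le[OF assms(3), of 2 "- 1 / 2"] assms(4)
    by (intro ennreal_leI) (simp add: field_simps)
  finally show ?thesis by (simp add: r_def)
qed

lemma emeasure_large_remainders_le: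
  assumes "lacunary m" "1 \<le> M" "finite (coeff_supp c)" "0 < \<alpha>"
  shows "emeasure lborel {t\<in>{0..1}.
      \<alpha>\<^sup>2 \<le> (\<Sum>k\<in>{M..L}. (cmod (trig_poly (\<lambda>j. of_real (rem_multiplier (m k) j) * c j) t))\<^sup>2)}
    \<le> ennreal (8 * l2_sq c / \<alpha>\<^sup>2)"
proof -
  define G where "G t = (\<Sum>k\<in>{M..L}. (cmod (trig_poly (\<lambda>j. of_real (rem_multiplier (m k) j) * c j) t))\<^sup>2)" for t
  have "(G has_integral (\<Sum>k\<in>{M..L}. l2_sq (\<lambda>j. of_real (rem_multiplier (m k) j) * c j))) {0..1}"
    unfolding G_def
    using Parseval_trig_poly[where n = 1 and a = 0, OF finite_coeff_supp_mult[OF assms(3)]]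
    by (intro has_integral_sum) auto
  then have "integral {0..1} G \<le> 8 * l2_sq c"
    using sum_l2_sq_remainders_le[OF assms(1-3)] by (simp add: integral_unique)
  moreover have "emeasure lborel {t\<in>{0..1}. \<alpha>\<^sup>2 \<le> G t} \<le> ennreal (integral {0..1} G / \<alpha>\<^sup>2)"
  proof (rule emeasure_Markov_continuous)
    show "continuous_on {0..1} G"
      unfolding G_def by (intro continuous_intros)
  qed (use assms(4) in \<open>auto simp: G_def sum_nonneg\<close>)
  ultimately show ?thesis
    unfolding G_def by (meson divide_right_mono ennreal_leI order.trans zero_le_power2)
qed

lemma emeasure_large_partial_sums_le:
  assumes "lacunary m" "1 \<le> M" "finite (coeff_supp c)" "0 < \<alpha>"
  shows "emeasure lborel {t\<in>{0..1}. \<exists>k\<in>{M..L}. 2 * \<alpha> < cmod (trig_poly (trunc_coeffs (m k) c) t)}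
    \<le> ennreal (10 * sqrt (l2_sq c) / \<alpha> + 8 * l2_sq c / \<alpha>\<^sup>2)"
proof -
  define avg where "avg k = trig_poly (\<lambda>j. of_real (avg_multiplier (1 / (2 * real (m k))) j) * c j)" for k
  define rem where "rem k = trig_poly (\<lambda>j. of_real (rem_multiplier (m k) j) * c j)" for k
  define S1 where "S1 = {t\<in>{0..1}. \<exists>k\<in>{M..L}. \<alpha> < cmod (avg k t)}"
  define S2 where "S2 = {t\<in>{0..1}. \<alpha>\<^sup>2 \<le> (\<Sum>k\<in>{M..L}. (cmod (rem k t))\<^sup>2)}"
  have "{t\<in>{0..1}. \<exists>k\<in>{M..L}. 2 * \<alpha> < cmod (trig_poly (trunc_coeffs (m k) c) t)} \<subseteq> S1 \<union> S2"
  proof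
    fix t assume "t \<in> {t\<in>{0..1}. \<exists>k\<in>{M..L}. 2 * \<alpha> < cmod (trig_poly (trunc_coeffs (m k) c) t)}"
    then obtain k where t: "t \<in> {0..1}" "k \<in> {M..L}"
      and large: "2 * \<alpha> < cmod (trig_poly (trunc_coeffs (m k) c) t)"
      by blast
    show "t \<in> S1 \<union> S2"
    proof (cases "t \<in> S1")
      case False
      then have "cmod (avg k t) \<le> \<alpha>"
        using t by (force simp: S1_def not_less)
      moreover have "cmod (trig_poly (trunc_coeffs (m k) c) t) \<le> cmod (avg k t) + cmod (rem k t)"
        unfolding avg_def rem_def trig_poly_trunc_coeffs_split[OF assms(3)] by (rule norm_triangle_ineq)
      ultimately have "\<alpha>\<^sup>2 \<le> (cmod (rem k t))\<^sup>2"
        using large assms(4) by (intro power_mono) auto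
      also have "\<dots> \<le> (\<Sum>k\<in>{M..L}. (cmod (rem k t))\<^sup>2)"
        by (rule member_le_sum) (use t in auto)
      finally show ?thesis using t by (simp add: S2_def)
    qed simp
  qed
  moreover have "S1 \<in> sets lborel" "S2 \<in> sets lborel"
    unfolding S1_def S2_def avg_def rem_def by measurable
  ultimately have "emeasure lborel {t\<in>{0..1}. \<exists>k\<in>{M..L}. 2 * \<alpha> < cmod (trig_poly (trunc_coeffs (m k) c) t)}
      \<le> emeasure lborel S1 + emeasure lborel S2"
    by (intro order_trans[OF emeasure_mono emeasure_subadditive]) auto
  also have "\<dots> \<le> ennreal (10 * sqrt (l2_sq c) / \<alpha>) + ennreal (8 * l2_sq c / \<alpha>\<^sup>2)"
    unfolding S1_def S2_def avg_def rem_def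
    by (intro add_mono emeasure_large_smoothed_sums_le emeasure_large_remainders_le assms)
  finally show ?thesis
    using l2_sq_nonneg[of c] assms(4) by (simp add: ennreal_plus[symmetric] del: ennreal_plus)
qed

section \<open>Almost everywhere convergence\<close>

definition nested_partial_sums :: "(nat \<Rightarrow> nat) \<Rightarrow> (nat \<Rightarrow> int \<Rightarrow> complex) \<Rightarrow> bool" where
  "nested_partial_sums m F \<longleftrightarrow> (\<forall>k N. 1 \<le> k \<longrightarrow> k \<le> N \<longrightarrow> trunc_coeffs (m k) (F N) = F k)"

lemma nested_partial_sumsD:
  "nested_partial_sums m F \<Longrightarrow> 1 \<le> k \<Longrightarrow> k \<le> N \<Longrightarrow> trunc_coeffs (m k) (F N) = F k"
  by (simp add: nested_partial_sums_def)

lemma finite_coeff_supp_nested: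
  assumes "nested_partial_sums m F" "1 \<le> N"
  shows "finite (coeff_supp (F N))"
proof -
  have "finite (coeff_supp (trunc_coeffs (m N) (F N)))"
    by (rule finite_coeff_supp_trunc_coeffs)
  then show ?thesis
    using nested_partial_sumsD[OF assms order_refl] by simp
qed

lemma nested_partial_sums_l2_Cauchy:
  assumes nested: "nested_partial_sums m F" and bounded: "\<And>N. l2_sq (F N) \<le> C"
  obtains \<tau> where "\<tau> \<longlonglongrightarrow> 0" "\<And>M N. 1 \<le> M \<Longrightarrow> M \<le> N \<Longrightarrow> l2_sq (\<lambda>j. F N j - F M j) \<le> \<tau> M"
proof -
  have split: "l2_sq (F N) = l2_sq (F M) + l2_sq (\<lambda>j. F N j - F M j)" if "1 \<le> M" "M \<le> N" for M N
    using l2_sq_trunc_coeffs_split[OF finite_coeff_supp_nested[OF nested], of N "m M"]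
      nested_partial_sumsD[OF nested that] that by simp
  define \<sigma> where "\<sigma> = (SUP N. l2_sq (F (Suc N)))"
  have bdd: "bdd_above (range (\<lambda>N. l2_sq (F (Suc N))))"
    by (rule bdd_aboveI2) (rule bounded)
  have "l2_sq (F (Suc N)) \<le> l2_sq (F (Suc (Suc N)))" for N
    using split[of "Suc N" "Suc (Suc N)"] l2_sq_nonneg[of "\<lambda>j. F (Suc (Suc N)) j - F (Suc N) j"] by simp
  then have "(\<lambda>N. l2_sq (F (Suc N))) \<longlonglongrightarrow> \<sigma>"
    unfolding \<sigma>_def by (intro LIMSEQ_incseq_SUP bdd incseq_SucI)
  then have "(\<lambda>M. l2_sq (F M)) \<longlonglongrightarrow> \<sigma>"
    by (rule LIMSEQ_imp_Suc)
  from tendsto_diff[OF tendsto_const[of \<sigma>] this]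
  have "(\<lambda>M. \<sigma> - l2_sq (F M)) \<longlonglongrightarrow> 0"
    by simp
  moreover have "l2_sq (\<lambda>j. F N j - F M j) \<le> \<sigma> - l2_sq (F M)" if "1 \<le> M" "M \<le> N" for M N
  proof -
    have "l2_sq (F (Suc (N - 1))) \<le> \<sigma>"
      unfolding \<sigma>_def by (rule cSUP_upper[OF _ bdd]) simp
    then show ?thesis using split[OF that] that by simp
  qed
  ultimately show ?thesis using that by blast
qed

lemma trunc_coeffs_nested_diff:
  assumes lac: "lacunary m" and nested: "nested_partial_sums m F"
    and "1 \<le> M" "M \<le> k" "k \<le> L"
  shows "trunc_coeffs (m k) (\<lambda>j. F L j - F M j) = (\<lambda>j. F k j - F M j)"
proof -
  have "trunc_coeffs (m k) (F M) = trunc_coeffs (m k) (trunc_coeffs (m M) (F M))"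
    using nested_partial_sumsD[OF nested \<open>1 \<le> M\<close> order_refl] by simp
  also have "\<dots> = trunc_coeffs (m M) (F M)"
    using lacunary_mono[OF lac \<open>1 \<le> M\<close> \<open>M \<le> k\<close>] by (simp add: trunc_coeffs_trunc_coeffs)
  also have "\<dots> = F M"
    using nested_partial_sumsD[OF nested \<open>1 \<le> M\<close> order_refl] .
  finally show ?thesis
    using nested_partial_sumsD[OF nested, of k L] assms(3-5) by (simp add: trunc_coeffs_diff)
qed

lemma emeasure_oscillation_le:
  assumes lac: "lacunary m" and nested: "nested_partial_sums m F"
    and tail: "\<And>N. M \<le> N \<Longrightarrow> l2_sq (\<lambda>j. F N j - F M j) \<le> x"
    and "1 \<le> M" "0 < \<alpha>"
  shows "emeasure lborel {t\<in>{0..1}. \<exists>k\<ge>M. 2 * \<alpha> < cmod (trig_poly (F k) t - trig_poly (F M) t)}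
    \<le> ennreal (10 * sqrt x / \<alpha> + 8 * x / \<alpha>\<^sup>2)"
proof -
  define osc where "osc L = {t\<in>{0..1}. \<exists>k\<in>{M..L}. 2 * \<alpha> < cmod (trig_poly (F k) t - trig_poly (F M) t)}" for L
  have fin: "finite (coeff_supp (F k))" if "M \<le> k" for k
    using finite_coeff_supp_nested[OF nested] that \<open>1 \<le> M\<close> by simp
  have "emeasure lborel (osc L) \<le> ennreal (10 * sqrt x / \<alpha> + 8 * x / \<alpha>\<^sup>2)" for L
  proof (cases "M \<le> L")
    case True
    define d where "d = (\<lambda>j. F L j - F M j)"
    have "osc L = {t\<in>{0..1}. \<exists>k\<in>{M..L}. 2 * \<alpha> < cmod (trig_poly (trunc_coeffs (m k) d) t)}"
      using trunc_coeffs_nested_diff[OF lac nested \<open>1 \<le> M\<close>] fin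
      by (auto simp: osc_def d_def trig_poly_diff)
    also have "emeasure lborel \<dots> \<le> ennreal (10 * sqrt (l2_sq d) / \<alpha> + 8 * l2_sq d / \<alpha>\<^sup>2)"
      using fin True \<open>1 \<le> M\<close> \<open>0 < \<alpha>\<close> unfolding d_def
      by (intro emeasure_large_partial_sums_le lac finite_coeff_supp_diff) auto
    also have "\<dots> \<le> ennreal (10 * sqrt x / \<alpha> + 8 * x / \<alpha>\<^sup>2)"
      using tail[OF True] \<open>0 < \<alpha>\<close> unfolding d_def
      by (intro ennreal_leI add_mono divide_right_mono mult_left_mono) auto
    finally show ?thesis .
  qed (simp add: osc_def)
  moreover have "{t\<in>{0..1}. \<exists>k\<ge>M. 2 * \<alpha> < cmod (trig_poly (F k) t - trig_poly (F M) t)} = (\<Union>L. osc L)"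
    by (fastforce simp: osc_def)
  moreover have "emeasure lborel (\<Union>L. osc L) = (SUP L. emeasure lborel (osc L))"
  proof (rule SUP_emeasure_incseq[symmetric])
    have "osc L \<in> sets lborel" for L
      unfolding osc_def by measurable
    then show "range osc \<subseteq> sets lborel" by blast
    show "incseq osc"
      by (auto simp: osc_def incseq_def)
  qed
  ultimately show ?thesis
    by (simp add: SUP_least)
qed

lemma not_Cauchy_imp_oscillation:
  fixes f :: "nat \<Rightarrow> 'a::metric_space"
  assumes "\<not> Cauchy f"
  obtains e where "0 < e" "\<And>M. \<exists>k\<ge>M. e < dist (f k) (f M)"
proof -
  obtain e where e: "0 < e" and far: "\<And>M. \<exists>p\<ge>M. \<exists>q\<ge>M. e \<le> dist (f p) (f q)"
    using assms unfolding Cauchy_def by (meson not_le)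
  have "\<exists>k\<ge>M. e / 3 < dist (f k) (f M)" for M
  proof -
    obtain p q where "p \<ge> M" "q \<ge> M" "e \<le> dist (f p) (f q)"
      using far by blast
    moreover have "dist (f p) (f q) \<le> dist (f p) (f M) + dist (f q) (f M)"
      by (rule dist_triangle2)
    ultimately have "e / 3 < dist (f p) (f M) \<or> e / 3 < dist (f q) (f M)"
      using e by linarith
    then show ?thesis using \<open>p \<ge> M\<close> \<open>q \<ge> M\<close> by blast
  qed
  moreover have "0 < e / 3" using e by simp
  ultimately show ?thesis using that by blast
qed

lemma null_sets_if_emeasure_le_tendsto_0:
  assumes "S \<in> sets M" "\<And>n. N0 \<le> n \<Longrightarrow> emeasure M S \<le> ennreal (u n)" "u \<longlonglongrightarrow> 0"
  shows "S \<in> null_sets M"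
proof -
  have "(\<lambda>n. ennreal (u n)) \<longlonglongrightarrow> 0"
    using tendsto_ennrealI[OF assms(3)] by simp
  then have "emeasure M S \<le> 0"
    using assms(2) by (intro LIMSEQ_le_const) auto
  then show ?thesis
    using assms(1) by (simp add: null_sets_def)
qed

theorem AE_convergent_nested_partial_sums:
  assumes lac: "lacunary m" and nested: "nested_partial_sums m F" and bounded: "\<And>N. l2_sq (F N) \<le> C"
  shows "AE t in lborel. t \<in> {0..1} \<longrightarrow> convergent (\<lambda>N. trig_poly (F N) t)"
proof -
  obtain \<tau> where \<tau>: "\<tau> \<longlonglongrightarrow> 0" "\<And>M N. 1 \<le> M \<Longrightarrow> M \<le> N \<Longrightarrow> l2_sq (\<lambda>j. F N j - F M j) \<le> \<tau> M"
    using nested_partial_sums_l2_Cauchy[OF nested bounded] by blast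
  define osc where "osc \<alpha> M = {t\<in>{0..1}. \<exists>k\<ge>M. 2 * \<alpha> < cmod (trig_poly (F k) t - trig_poly (F M) t)}"
    for \<alpha> :: real and M
  have null: "(\<Inter>M\<in>{1..}. osc \<alpha> M) \<in> null_sets lborel" if "0 < \<alpha>" for \<alpha>
  proof (rule null_sets_if_emeasure_le_tendsto_0)
    show "(\<Inter>M\<in>{1..}. osc \<alpha> M) \<in> sets lborel"
      unfolding osc_def by measurable
    show "emeasure lborel (\<Inter>M\<in>{1..}. osc \<alpha> M) \<le> ennreal (10 * sqrt (\<tau> M) / \<alpha> + 8 * \<tau> M / \<alpha>\<^sup>2)"
      if "1 \<le> M" for M
    proof -
      have "emeasure lborel (\<Inter>M\<in>{1..}. osc \<alpha> M) \<le> emeasure lborel (osc \<alpha> M)"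
        using that by (intro emeasure_mono) (auto simp: osc_def)
      also have "\<dots> \<le> ennreal (10 * sqrt (\<tau> M) / \<alpha> + 8 * \<tau> M / \<alpha>\<^sup>2)"
        unfolding osc_def using \<tau>(2) that \<open>0 < \<alpha>\<close> by (intro emeasure_oscillation_le[OF lac nested]) auto
      finally show ?thesis .
    qed
    have "(\<lambda>M. 10 * sqrt (\<tau> M) / \<alpha> + 8 * \<tau> M / \<alpha>\<^sup>2) \<longlonglongrightarrow> 10 * sqrt 0 / \<alpha> + 8 * 0 / \<alpha>\<^sup>2"
      using \<open>0 < \<alpha>\<close> by (intro tendsto_intros \<tau>(1)) auto
    then show "(\<lambda>M. 10 * sqrt (\<tau> M) / \<alpha> + 8 * \<tau> M / \<alpha>\<^sup>2) \<longlonglongrightarrow> 0"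
      by simp
  qed
  have "t \<in> (\<Union>n. \<Inter>M\<in>{1..}. osc (1 / real (Suc n)) M)"
    if t: "t \<in> {0..1}" and nonconv: "\<not> convergent (\<lambda>N. trig_poly (F N) t)" for t
  proof -
    obtain e where "0 < e" and e: "\<And>M. \<exists>k\<ge>M. e < dist (trig_poly (F k) t) (trig_poly (F M) t)"
      using nonconv not_Cauchy_imp_oscillation Cauchy_convergent_iff by blast
    then obtain n where "2 * (1 / real (Suc n)) < e"
      using reals_Archimedean[of "e / 2"] by (auto simp: field_simps)
    then have "t \<in> osc (1 / real (Suc n)) M" for M
      using e[of M] t by (force simp: osc_def dist_norm)
    then show ?thesis by blast
  qed
  then show ?thesis
    by (intro AE_I'[where N = "\<Union>n. \<Inter>M\<in>{1..}. osc (1 / real (Suc n)) M"] null_sets_UN null) auto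
qed

section \<open>The product in \<open>SU(1,1)\<close>\<close>

lemma mat2_mult:
  "mat2 a b c d ** mat2 a' b' c' d' = mat2 (a * a' + b * c') (a * b' + b * d') (c * a' + d * c') (c * b' + d * d')"
  unfolding mat2_def by (simp add: vec_eq_iff matrix_matrix_mult_def forall_2 sum_2 vector_def)

lemma mat2_eq_iff: "mat2 a b c d = mat2 a' b' c' d' \<longleftrightarrow> a = a' \<and> b = b' \<and> c = c' \<and> d = d'"
  unfolding mat2_def by (metis vector_2)

lemma mat_1_eq_mat2: "(mat 1 :: complex^2^2) = mat2 1 0 (cnj 0) (cnj 1)"
  unfolding mat2_def by (simp add: vec_eq_iff mat_def forall_2 vector_def)

lemma tendsto_mat2:
  assumes "(f \<longlongrightarrow> a) F" "(g \<longlongrightarrow> b) F" "(h \<longlongrightarrow> c) F" "(k \<longlongrightarrow> d) F"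
  shows "((\<lambda>x. mat2 (f x) (g x) (h x) (k x)) \<longlongrightarrow> mat2 a b c d) F"
proof -
  have mat2_chi: "mat2 a b c d = (\<chi> i j. if i = 1 then if j = 1 then a else b else if j = 1 then c else d)"
    for a b c d :: complex
    unfolding mat2_def by (simp add: vec_eq_iff forall_2 vector_def)
  show ?thesis
  proof (unfold mat2_chi, intro tendsto_vec_lambda)
    fix i j :: 2
    show "((\<lambda>x. if i = 1 then if j = 1 then f x else g x else if j = 1 then h x else k x) \<longlongrightarrow>
        (if i = 1 then if j = 1 then a else b else if j = 1 then c else d)) F"
      using assms by (cases "i = 1"; cases "j = 1") simp_all
  qed
qed

lemma SU11_mat2_iff: "mat2 a b (cnj b) (cnj a) \<in> SU11 \<longleftrightarrow> (cmod a)\<^sup>2 - (cmod b)\<^sup>2 = 1"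
  by (auto simp: SU11_def mat2_eq_iff)

lemma SU11_mult:
  assumes "G \<in> SU11" "H \<in> SU11"
  shows "G ** H \<in> SU11"
proof -
  obtain a b where G: "G = mat2 a b (cnj b) (cnj a)" and ab: "(cmod a)\<^sup>2 - (cmod b)\<^sup>2 = 1"
    using assms(1) by (auto simp: SU11_def)
  obtain a' b' where H: "H = mat2 a' b' (cnj b') (cnj a')" and ab': "(cmod a')\<^sup>2 - (cmod b')\<^sup>2 = 1"
    using assms(2) by (auto simp: SU11_def)
  define x where "x = a * a' + b * cnj b'"
  define y where "y = a * b' + b * cnj a'"
  have "G ** H = mat2 x y (cnj y) (cnj x)"
    by (simp add: G H x_def y_def mat2_mult algebra_simps)
  moreover have "(cmod x)\<^sup>2 - (cmod y)\<^sup>2 = ((cmod a)\<^sup>2 - (cmod b)\<^sup>2) * ((cmod a')\<^sup>2 - (cmod b')\<^sup>2)"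
  proof -
    have "complex_of_real ((cmod x)\<^sup>2 - (cmod y)\<^sup>2)
        = complex_of_real (((cmod a)\<^sup>2 - (cmod b)\<^sup>2) * ((cmod a')\<^sup>2 - (cmod b')\<^sup>2))"
      unfolding of_real_diff of_real_mult complex_norm_square by (simp add: x_def y_def algebra_simps)
    then show ?thesis by (simp only: of_real_eq_iff)
  qed
  ultimately show ?thesis
    using ab ab' by (simp add: SU11_mat2_iff)
qed

lemma factor_eq_mat2:
  "factor A B m j t = mat2 (of_real (A j)) (B j * circle_char (m j) t)
     (cnj (B j * circle_char (m j) t)) (cnj (of_real (A j)))"
  by (simp add: factor_def cnj_circle_char) (simp add: circle_char_def)

lemma partial_prod_in_SU11:
  assumes "\<And>j. 1 \<le> j \<Longrightarrow> (A j)\<^sup>2 - (cmod (B j))\<^sup>2 = 1"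
  shows "partial_prod A B m N t \<in> SU11"
proof (induction N)
  case 0
  show ?case by (simp add: mat_1_eq_mat2 SU11_mat2_iff del: complex_cnj_zero complex_cnj_one)
next
  case (Suc N)
  have "factor A B m (Suc N) t \<in> SU11"
    unfolding factor_eq_mat2 SU11_mat2_iff using assms[of "Suc N"] by (simp add: norm_mult)
  with Suc.IH show ?case by (simp add: SU11_mult)
qed

text \<open>Coefficients of trigonometric polynomials \<open>a\<^sub>N\<close>, \<open>b\<^sub>N\<close> with
  \<open>partial_prod A B m N t = (\<Prod>j=1..N. A j) [[a\<^sub>N, b\<^sub>N], [cnj b\<^sub>N, cnj a\<^sub>N]]\<close>, where \<open>c j = B j / A j\<close>:
  right multiplication by the normalised factor \<open>[[1, c e\<^sub>m], [cnj (c e\<^sub>m), 1]]\<close> gives the recursion.\<close>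

fun coeff_a :: "(nat \<Rightarrow> nat) \<Rightarrow> (nat \<Rightarrow> complex) \<Rightarrow> nat \<Rightarrow> int \<Rightarrow> complex"
  and coeff_b :: "(nat \<Rightarrow> nat) \<Rightarrow> (nat \<Rightarrow> complex) \<Rightarrow> nat \<Rightarrow> int \<Rightarrow> complex" where
  "coeff_a m c 0 = (\<lambda>j. if j = 0 then 1 else 0)"
| "coeff_a m c (Suc N) = (\<lambda>j. coeff_a m c N j + cnj (c (Suc N)) * coeff_b m c N (j + int (m (Suc N))))"
| "coeff_b m c 0 = (\<lambda>j. 0)"
| "coeff_b m c (Suc N) = (\<lambda>j. coeff_b m c N j + c (Suc N) * coeff_a m c N (j - int (m (Suc N))))"

lemma coeff_b_Suc_shift:
  "coeff_b m c (Suc N) = (\<lambda>j. coeff_b m c N j + c (Suc N) * coeff_a m c N (j + - int (m (Suc N))))"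
  by simp

lemma finite_coeff_supp_coeff_ab:
  "finite (coeff_supp (coeff_a m c N)) \<and> finite (coeff_supp (coeff_b m c N))"
proof (induction N)
  case 0
  have "coeff_supp (coeff_a m c 0) = {0}" "coeff_supp (coeff_b m c 0) = {}"
    by (auto simp: coeff_supp_def)
  then show ?case by simp
next
  case (Suc N)
  then show ?case
    unfolding coeff_a.simps(2) coeff_b_Suc_shift
    by (intro conjI finite_coeff_supp_add finite_coeff_supp_shift) auto
qed

lemma trig_poly_coeff_a_0: "trig_poly (coeff_a m c 0) t = 1"
proof -
  have "coeff_supp (coeff_a m c 0) = {0}" by (auto simp: coeff_supp_def)
  then show ?thesis by (simp add: trig_poly_def circle_char_def)
qed

lemma trig_poly_coeff_b_0: "trig_poly (coeff_b m c 0) t = 0"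
  by (simp add: trig_poly_def coeff_supp_def)

lemma trig_poly_coeff_a_Suc:
  "trig_poly (coeff_a m c (Suc N)) t
     = trig_poly (coeff_a m c N) t + cnj (c (Suc N)) * circle_char (- int (m (Suc N))) t * trig_poly (coeff_b m c N) t"
  using finite_coeff_supp_coeff_ab[of m c N]
  by (simp only: coeff_a.simps(2) trig_poly_add finite_coeff_supp_shift trig_poly_shift)

lemma trig_poly_coeff_b_Suc:
  "trig_poly (coeff_b m c (Suc N)) t
     = trig_poly (coeff_b m c N) t + c (Suc N) * circle_char (int (m (Suc N))) t * trig_poly (coeff_a m c N) t"
  using finite_coeff_supp_coeff_ab[of m c N]
  by (simp only: coeff_b_Suc_shift trig_poly_add finite_coeff_supp_shift trig_poly_shift minus_minus)

text \<open>Lacunarity keeps the spectra apart: \<open>a\<^sub>N\<close> lives on \<open>(-m N, 0]\<close> and \<open>b\<^sub>N\<close> on \<open>(0, m N]\<close>.\<close>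

lemma coeff_ab_nonzero_imp:
  assumes "lacunary m"
  shows "(coeff_a m c N j \<noteq> 0 \<longrightarrow> j \<le> 0 \<and> (N = 0 \<longrightarrow> j = 0) \<and> (1 \<le> N \<longrightarrow> - int (m N) < j))
       \<and> (coeff_b m c N j \<noteq> 0 \<longrightarrow> 1 \<le> N \<and> 0 < j \<and> j \<le> int (m N))"
proof (induction N arbitrary: j)
  case 0
  then show ?case by simp
next
  case (Suc N)
  have IH_a: "j \<le> 0 \<and> (N = 0 \<longrightarrow> j = 0) \<and> (1 \<le> N \<longrightarrow> - int (m N) < j)" if "coeff_a m c N j \<noteq> 0" for j
    using Suc.IH that by blast
  have IH_b: "1 \<le> N \<and> 0 < j \<and> j \<le> int (m N)" if "coeff_b m c N j \<noteq> 0" for j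
    using Suc.IH that by blast
  have pos: "0 < m (Suc N)"
    using lacunary_pos[OF assms] by simp
  have double: "int (m N) + int (m N) \<le> int (m (Suc N))" if "1 \<le> N"
    using lacunary_double[OF assms that] by linarith
  have "j \<le> 0 \<and> - int (m (Suc N)) < j" if nz: "coeff_a m c (Suc N) j \<noteq> 0"
  proof (cases "coeff_a m c N j = 0")
    case True
    then have "coeff_b m c N (j + int (m (Suc N))) \<noteq> 0" using nz by simp
    from IH_b[OF this] double show ?thesis by linarith
  next
    case False
    from IH_a[OF this] pos double show ?thesis by (cases "N = 0") simp_all
  qed
  moreover have "0 < j \<and> j \<le> int (m (Suc N))" if nz: "coeff_b m c (Suc N) j \<noteq> 0"
  proof (cases "coeff_b m c N j = 0")
    case True
    then have "coeff_a m c N (j - int (m (Suc N))) \<noteq> 0" using nz by simp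
    from IH_a[OF this] pos double show ?thesis by (cases "N = 0") simp_all
  next
    case False
    from IH_b[OF this] double show ?thesis by linarith
  qed
  ultimately show ?case by simp
qed

lemma trunc_coeffs_coeff_ab_Suc:
  assumes "lacunary m" "1 \<le> k" "k \<le> N"
  shows "trunc_coeffs (m k) (coeff_a m c (Suc N)) = trunc_coeffs (m k) (coeff_a m c N)"
    and "trunc_coeffs (m k) (coeff_b m c (Suc N)) = trunc_coeffs (m k) (coeff_b m c N)"
proof -
  note supp = coeff_ab_nonzero_imp[OF assms(1), of c N]
  have "m k \<le> m N" "2 * m N \<le> m (Suc N)"
    using lacunary_mono[OF assms] lacunary_double[OF assms(1)] assms(2,3) by auto
  then have mk: "int (m k) \<le> int (m N)" and double: "int (m N) + int (m N) \<le> int (m (Suc N))"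
    by linarith+
  have "coeff_b m c N (j + int (m (Suc N))) = 0 \<and> coeff_a m c N (j - int (m (Suc N))) = 0"
    if "- int (m k) < j" "j \<le> int (m k)" for j
  proof (intro conjI)
    show "coeff_b m c N (j + int (m (Suc N))) = 0"
    proof (rule ccontr)
      assume "coeff_b m c N (j + int (m (Suc N))) \<noteq> 0"
      with supp[of "j + int (m (Suc N))"] that mk double show False by linarith
    qed
    show "coeff_a m c N (j - int (m (Suc N))) = 0"
    proof (rule ccontr)
      assume "coeff_a m c N (j - int (m (Suc N))) \<noteq> 0"
      with supp[of "j - int (m (Suc N))"] that mk double assms(2,3) show False by auto
    qed
  qed
  then show "trunc_coeffs (m k) (coeff_a m c (Suc N)) = trunc_coeffs (m k) (coeff_a m c N)"
    and "trunc_coeffs (m k) (coeff_b m c (Suc N)) = trunc_coeffs (m k) (coeff_b m c N)"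
    by (simp_all add: fun_eq_iff trunc_coeffs_def)
qed

lemma nested_partial_sums_coeff_ab:
  assumes "lacunary m"
  shows "nested_partial_sums m (coeff_a m c)" "nested_partial_sums m (coeff_b m c)"
proof -
  have "trunc_coeffs (m k) (coeff_a m c N) = coeff_a m c k \<and> trunc_coeffs (m k) (coeff_b m c N) = coeff_b m c k"
    if "1 \<le> k" "k \<le> N" for k N
    using that(2)
  proof (induction N rule: dec_induct)
    case base
    have "coeff_a m c k j = 0 \<and> coeff_b m c k j = 0" if "\<not> (- int (m k) < j \<and> j \<le> int (m k))" for j
      using coeff_ab_nonzero_imp[OF assms, of c k j] that \<open>1 \<le> k\<close> lacunary_pos[OF assms \<open>1 \<le> k\<close>]
      by linarith
    then show ?case
      by (auto simp: fun_eq_iff trunc_coeffs_def)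
  next
    case (step N)
    then show ?case
      using trunc_coeffs_coeff_ab_Suc[OF assms that(1)] by simp
  qed
  then show "nested_partial_sums m (coeff_a m c)" "nested_partial_sums m (coeff_b m c)"
    by (simp_all add: nested_partial_sums_def)
qed

lemma coeff_ab_disjoint:
  assumes "lacunary m"
  shows "coeff_a m c N j = 0 \<or> coeff_b m c N (j + int (m (Suc N))) = 0"
    and "coeff_b m c N j = 0 \<or> coeff_a m c N (j - int (m (Suc N))) = 0"
proof -
  note supp = coeff_ab_nonzero_imp[OF assms, of c N]
  have double: "int (m N) + int (m N) \<le> int (m (Suc N))" if "1 \<le> N"
    using lacunary_double[OF assms that] by linarith
  show "coeff_a m c N j = 0 \<or> coeff_b m c N (j + int (m (Suc N))) = 0"
  proof (rule disjCI)
    assume "coeff_b m c N (j + int (m (Suc N))) \<noteq> 0"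
    then have "1 \<le> N" "j + int (m (Suc N)) \<le> int (m N)"
      using supp[of "j + int (m (Suc N))"] by auto
    then have "\<not> - int (m N) < j" using double by linarith
    then show "coeff_a m c N j = 0" using supp[of j] \<open>1 \<le> N\<close> by blast
  qed
  show "coeff_b m c N j = 0 \<or> coeff_a m c N (j - int (m (Suc N))) = 0"
  proof (rule disjCI)
    assume "coeff_a m c N (j - int (m (Suc N))) \<noteq> 0"
    then have "N = 0 \<longrightarrow> j - int (m (Suc N)) = 0" "1 \<le> N \<longrightarrow> - int (m N) < j - int (m (Suc N))"
      using supp[of "j - int (m (Suc N))"] by auto
    then have "1 \<le> N \<longrightarrow> \<not> j \<le> int (m N)" using double by linarith
    then show "coeff_b m c N j = 0" using supp[of j] by blast
  qed
qed

lemma l2_sq_coeff_ab: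
  assumes "lacunary m"
  shows "l2_sq (coeff_a m c N) + l2_sq (coeff_b m c N) = (\<Prod>j=1..N. 1 + (cmod (c j))\<^sup>2)"
proof (induction N)
  case 0
  have "coeff_supp (coeff_a m c 0) = {0}" "coeff_supp (coeff_b m c 0) = {}"
    by (auto simp: coeff_supp_def)
  then show ?case by (simp add: l2_sq_def)
next
  case (Suc N)
  have fin: "finite (coeff_supp (coeff_a m c N))" "finite (coeff_supp (coeff_b m c N))"
    using finite_coeff_supp_coeff_ab by auto
  have "l2_sq (coeff_a m c (Suc N))
      = l2_sq (coeff_a m c N) + l2_sq (\<lambda>j. cnj (c (Suc N)) * coeff_b m c N (j + int (m (Suc N))))"
    unfolding coeff_a.simps(2) using fin coeff_ab_disjoint(1)[OF assms]
    by (intro l2_sq_add_disjoint finite_coeff_supp_shift) auto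
  moreover have "l2_sq (coeff_b m c (Suc N))
      = l2_sq (coeff_b m c N) + l2_sq (\<lambda>j. c (Suc N) * coeff_a m c N (j + - int (m (Suc N))))"
    unfolding coeff_b_Suc_shift using fin coeff_ab_disjoint(2)[OF assms]
    by (intro l2_sq_add_disjoint finite_coeff_supp_shift) auto
  ultimately have "l2_sq (coeff_a m c (Suc N)) + l2_sq (coeff_b m c (Suc N))
      = (1 + (cmod (c (Suc N)))\<^sup>2) * (l2_sq (coeff_a m c N) + l2_sq (coeff_b m c N))"
    using l2_sq_shift[OF fin(1), of "c (Suc N)" "- int (m (Suc N))"]
      l2_sq_shift[OF fin(2), of "cnj (c (Suc N))" "int (m (Suc N))"]
    by (simp add: algebra_simps)
  then show ?case
    using Suc.IH by (simp add: prod.nat_ivl_Suc')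
qed

lemma partial_prod_eq_mat2:
  fixes A :: "nat \<Rightarrow> real" and B :: "nat \<Rightarrow> complex"
  assumes "\<And>j. 1 \<le> j \<Longrightarrow> A j \<noteq> 0"
  defines "c \<equiv> \<lambda>j. B j / complex_of_real (A j)"
  shows "partial_prod A B m N t =
    mat2 (of_real (\<Prod>j=1..N. A j) * trig_poly (coeff_a m c N) t)
      (of_real (\<Prod>j=1..N. A j) * trig_poly (coeff_b m c N) t)
      (cnj (of_real (\<Prod>j=1..N. A j) * trig_poly (coeff_b m c N) t))
      (cnj (of_real (\<Prod>j=1..N. A j) * trig_poly (coeff_a m c N) t))"
proof (induction N)
  case 0
  show ?case
    by (simp add: mat_1_eq_mat2 trig_poly_coeff_a_0 trig_poly_coeff_b_0 del: coeff_a.simps coeff_b.simps)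
next
  case (Suc N)
  have "complex_of_real (A (Suc N)) \<noteq> 0" using assms by simp
  then show ?case
    by (simp add: Suc.IH factor_eq_mat2 mat2_mult trig_poly_coeff_a_Suc trig_poly_coeff_b_Suc
        prod.nat_ivl_Suc' c_def cnj_circle_char mat2_eq_iff field_simps del: coeff_a.simps coeff_b.simps)
qed

lemma partial_prod_convergent_in_SU11:
  fixes A :: "nat \<Rightarrow> real" and B :: "nat \<Rightarrow> complex"
  assumes A: "\<And>j. 1 \<le> j \<Longrightarrow> A j \<noteq> 0" and AB: "\<And>j. 1 \<le> j \<Longrightarrow> (A j)\<^sup>2 - (cmod (B j))\<^sup>2 = 1"
  defines "c \<equiv> \<lambda>j. B j / complex_of_real (A j)"
  assumes "convergent (\<lambda>N. \<Prod>j=1..N. A j)"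
    and "convergent (\<lambda>N. trig_poly (coeff_a m c N) t)" "convergent (\<lambda>N. trig_poly (coeff_b m c N) t)"
  shows "\<exists>G\<in>SU11. (\<lambda>N. partial_prod A B m N t) \<longlonglongrightarrow> G"
proof -
  define x where "x N = of_real (\<Prod>j=1..N. A j) * trig_poly (coeff_a m c N) t" for N
  define y where "y N = of_real (\<Prod>j=1..N. A j) * trig_poly (coeff_b m c N) t" for N
  have pp: "partial_prod A B m N t = mat2 (x N) (y N) (cnj (y N)) (cnj (x N))" for N
    unfolding x_def y_def c_def using A by (rule partial_prod_eq_mat2)
  obtain P \<alpha> \<beta> where P: "(\<lambda>N. \<Prod>j=1..N. A j) \<longlonglongrightarrow> P"
    and \<alpha>: "(\<lambda>N. trig_poly (coeff_a m c N) t) \<longlonglongrightarrow> \<alpha>" and \<beta>: "(\<lambda>N. trig_poly (coeff_b m c N) t) \<longlonglongrightarrow> \<beta>"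
    using assms(4-6) unfolding convergent_def by blast
  have x: "x \<longlonglongrightarrow> of_real P * \<alpha>"
    unfolding x_def by (rule tendsto_mult[OF tendsto_of_real[OF P] \<alpha>])
  have y: "y \<longlonglongrightarrow> of_real P * \<beta>"
    unfolding y_def by (rule tendsto_mult[OF tendsto_of_real[OF P] \<beta>])
  define x_lim y_lim where "x_lim = of_real P * \<alpha>" and "y_lim = of_real P * \<beta>"
  have "(\<lambda>N. (cmod (x N))\<^sup>2 - (cmod (y N))\<^sup>2) \<longlonglongrightarrow> (cmod x_lim)\<^sup>2 - (cmod y_lim)\<^sup>2"
    unfolding x_lim_def y_lim_def by (intro tendsto_intros x y)
  moreover have "(cmod (x N))\<^sup>2 - (cmod (y N))\<^sup>2 = 1" for N
    using partial_prod_in_SU11[of A B m N t, OF AB] by (simp add: pp SU11_mat2_iff)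
  ultimately have "mat2 x_lim y_lim (cnj y_lim) (cnj x_lim) \<in> SU11"
    by (simp add: SU11_mat2_iff LIMSEQ_const_iff)
  moreover have "(\<lambda>N. partial_prod A B m N t) \<longlonglongrightarrow> mat2 x_lim y_lim (cnj y_lim) (cnj x_lim)"
    unfolding pp x_lim_def y_lim_def by (intro tendsto_mat2 tendsto_cnj x y)
  ultimately show ?thesis by blast
qed

lemma prod_le_exp_suminf_ln:
  fixes x :: "nat \<Rightarrow> real"
  assumes "summable (\<lambda>n. ln (x n))" "\<And>n. 1 \<le> x n"
  shows "(\<Prod>n<N. x n) \<le> exp (\<Sum>n. ln (x n))"
proof -
  have "(\<Prod>n<N. x n) = exp (\<Sum>n<N. ln (x n))"
    using assms(2) by (simp add: exp_sum order_less_le_trans[OF zero_less_one])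
  also have "\<dots> \<le> exp (\<Sum>n. ln (x n))"
    using assms by (intro exp_mono sum_le_suminf) auto
  finally show ?thesis .
qed

lemma convergent_prod_if_summable_ln:
  fixes x :: "nat \<Rightarrow> real"
  assumes "summable (\<lambda>n. ln (x n))" "\<And>n. 0 < x n"
  shows "convergent (\<lambda>N. \<Prod>n<N. x n)"
proof -
  have "(\<lambda>N. exp (\<Sum>n<N. ln (x n))) \<longlonglongrightarrow> exp (\<Sum>n. ln (x n))"
    by (intro tendsto_exp summable_LIMSEQ assms(1))
  then show ?thesis
    using assms(2) by (auto simp: convergent_def exp_sum)
qed

lemma one_le_if_sq_diff_eq_1:
  fixes a b :: real
  assumes "0 < a" "a\<^sup>2 - b\<^sup>2 = 1"
  shows "1 \<le> a"
proof -
  have "1 \<le> a\<^sup>2"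
    using assms(2) zero_le_power2[of b] by linarith
  then show ?thesis
    using assms(1) power2_le_imp_le[of 1 a] by simp
qed

lemma convergent_prod_if_summable_ln_sq_sum:
  fixes A :: "nat \<Rightarrow> real" and B :: "nat \<Rightarrow> complex"
  assumes A_pos: "\<And>j. 1 \<le> j \<Longrightarrow> 0 < A j"
    and AB: "\<And>j. 1 \<le> j \<Longrightarrow> (A j)\<^sup>2 - (cmod (B j))\<^sup>2 = 1"
    and summable_ln: "summable (\<lambda>j. ln ((A (Suc j))\<^sup>2 + (cmod (B (Suc j)))\<^sup>2))"
  shows "convergent (\<lambda>N. \<Prod>j=1..N. A j)"
proof -
  have A1: "1 \<le> A (Suc n)" for n
    using one_le_if_sq_diff_eq_1[OF A_pos[of "Suc n"] AB[of "Suc n"]] by simp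
  have "summable (\<lambda>n. ln (A (Suc n)))"
  proof (rule summable_comparison_test'[OF summable_ln])
    fix n
    have "A (Suc n) \<le> (A (Suc n))\<^sup>2 + (cmod (B (Suc n)))\<^sup>2"
      using A1[of n] by (simp add: power2_eq_square add_increasing2)
    then show "norm (ln (A (Suc n))) \<le> ln ((A (Suc n))\<^sup>2 + (cmod (B (Suc n)))\<^sup>2)"
      using A1[of n] by simp
  qed
  then show ?thesis
    using convergent_prod_if_summable_ln[of "\<lambda>n. A (Suc n)"] A_pos by (simp add: prod.atLeast1_atMost_eq)
qed

lemma l2_sq_coeff_ab_le_exp_suminf:
  fixes A :: "nat \<Rightarrow> real" and B :: "nat \<Rightarrow> complex"
  assumes A_pos: "\<And>j. 1 \<le> j \<Longrightarrow> 0 < A j"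
    and AB: "\<And>j. 1 \<le> j \<Longrightarrow> (A j)\<^sup>2 - (cmod (B j))\<^sup>2 = 1"
    and summable_ln: "summable (\<lambda>j. ln ((A (Suc j))\<^sup>2 + (cmod (B (Suc j)))\<^sup>2))"
    and "lacunary m"
  defines "c \<equiv> \<lambda>j. B j / complex_of_real (A j)"
  shows "l2_sq (coeff_a m c N) + l2_sq (coeff_b m c N) \<le> exp (\<Sum>j. ln ((A (Suc j))\<^sup>2 + (cmod (B (Suc j)))\<^sup>2))"
proof -
  have "1 + (cmod (c (Suc n)))\<^sup>2 \<le> (A (Suc n))\<^sup>2 + (cmod (B (Suc n)))\<^sup>2" for n
  proof -
    have "1 \<le> (A (Suc n))\<^sup>2"
      using one_le_if_sq_diff_eq_1[OF A_pos[of "Suc n"] AB[of "Suc n"]] by simp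
    then have "(cmod (B (Suc n)))\<^sup>2 / (A (Suc n))\<^sup>2 \<le> (cmod (B (Suc n)))\<^sup>2"
      by (simp add: divide_le_eq mult_le_cancel_left1)
    then show ?thesis
      using \<open>1 \<le> (A (Suc n))\<^sup>2\<close> by (simp add: c_def norm_divide power_divide)
  qed
  then have "(\<Prod>j=1..N. 1 + (cmod (c j))\<^sup>2) \<le> (\<Prod>n<N. (A (Suc n))\<^sup>2 + (cmod (B (Suc n)))\<^sup>2)"
    by (simp add: prod.atLeast1_atMost_eq prod_mono)
  also have "\<dots> \<le> exp (\<Sum>j. ln ((A (Suc j))\<^sup>2 + (cmod (B (Suc j)))\<^sup>2))"
  proof (rule prod_le_exp_suminf_ln[OF summable_ln])
    show "1 \<le> (A (Suc n))\<^sup>2 + (cmod (B (Suc n)))\<^sup>2" for n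
      using AB[of "Suc n"] zero_le_power2[of "cmod (B (Suc n))"] by linarith
  qed
  finally show ?thesis
    by (simp add: l2_sq_coeff_ab[OF assms(4)])
qed

lemma lacunary_if_ratio_ge:
  fixes q :: real
  assumes "q \<ge> 2" "\<And>j. j \<ge> 1 \<Longrightarrow> m j > 0" "\<And>j. j \<ge> 1 \<Longrightarrow> real (m (Suc j)) \<ge> q * real (m j)"
  shows "lacunary m"
  unfolding lacunary_def
proof (intro allI impI conjI)
  fix k :: nat assume k: "1 \<le> k"
  show "0 < m k" using assms(2) k by simp
  have "2 * real (m k) \<le> q * real (m k)" using assms(1) by (intro mult_right_mono) auto
  also have "\<dots> \<le> real (m (Suc k))" using assms(3) k by simp
  finally show "2 * m k \<le> m (Suc k)" by linarith
qed

theorem theorem1p2: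
  fixes m :: "nat \<Rightarrow> nat" and q :: real and A :: "nat \<Rightarrow> real" and B :: "nat \<Rightarrow> complex"
  assumes "q \<ge> 2"
    and "\<And>j. j \<ge> 1 \<Longrightarrow> m j > 0"
    and "\<And>j. j \<ge> 1 \<Longrightarrow> m j < m (Suc j)"
    and "\<And>j. j \<ge> 1 \<Longrightarrow> real (m (Suc j)) \<ge> q * real (m j)"
    and "\<And>j. j \<ge> 1 \<Longrightarrow> A j > 0"
    and "\<And>j. j \<ge> 1 \<Longrightarrow> (A j)\<^sup>2 - (cmod (B j))\<^sup>2 = 1"
    and "summable (\<lambda>j. ln ((A (Suc j))\<^sup>2 + (cmod (B (Suc j)))\<^sup>2))"
  shows "AE t in lebesgue_on {0..1}. \<exists>G \<in> SU11. (\<lambda>N. partial_prod A B m N t) \<longlonglongrightarrow> G"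
proof -
  have lac: "lacunary m"
    using assms(1,2,4) by (rule lacunary_if_ratio_ge)
  define c where "c = (\<lambda>j. B j / complex_of_real (A j))"
  define C where "C = exp (\<Sum>j. ln ((A (Suc j))\<^sup>2 + (cmod (B (Suc j)))\<^sup>2))"
  have "l2_sq (coeff_a m c N) \<le> C" "l2_sq (coeff_b m c N) \<le> C" for N
    using l2_sq_coeff_ab_le_exp_suminf[OF assms(5-7) lac, of N] l2_sq_nonneg[of "coeff_a m c N"]
      l2_sq_nonneg[of "coeff_b m c N"] unfolding c_def C_def by linarith+
  then have "AE t in lborel. t \<in> {0..1} \<longrightarrow> convergent (\<lambda>N. trig_poly (coeff_a m c N) t)"
    and "AE t in lborel. t \<in> {0..1} \<longrightarrow> convergent (\<lambda>N. trig_poly (coeff_b m c N) t)"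
    using nested_partial_sums_coeff_ab[OF lac] by (metis AE_convergent_nested_partial_sums[OF lac])+
  moreover have "A j \<noteq> 0" if "1 \<le> j" for j
    using assms(5) that by force
  ultimately have "AE t in lborel. t \<in> {0..1} \<longrightarrow> (\<exists>G \<in> SU11. (\<lambda>N. partial_prod A B m N t) \<longlonglongrightarrow> G)"
    using partial_prod_convergent_in_SU11[of A B m, OF _ assms(6) convergent_prod_if_summable_ln_sq_sum[OF assms(5-7)]]
    unfolding c_def by auto
  then show ?thesis
    by (subst AE_restrict_space_iff) (auto intro: AE_completion)
qed

end
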